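(* Let $p\ge1$, $X=\{0,1,\dots,p\}$, and for $i\in\{1,\dots,p\}$ let $e_i$ be the transformation of $X^\ast$ defined recursively (with $\emptyset\mapsto\emptyset$) by $e_i(0w)=i\,e_i(w)$, $e_i(iw)=0w$, $e_i(jw)=jw$ for $j\notin\{0,i\}$. For $n\ge1$ let $A_n=\sum_{i=1}^p\bigl(M^{(n)}_i+(M^{(n)}_i)^{-1}\bigr)$, where $M^{(n)}_i$ is the $(p+1)^n\times(p+1)^n$ permutation matrix of the action of $e_i$ on $X^n$, and let $P_n(\lambda)=\det(\lambda I-A_n)$. Then for every $n\ge1$ $$P_{n+1}(\lambda)=\bigl(\lambda-2(p-1)\bigr)^{(p-1)(p+1)^n}\,P_n(f_p(\lambda)),\qquad f_p(\lambda)=\lambda^2-2(p-1)\lambda-2p,$$ and $P_1(\lambda)=(\lambda-2p)(\lambda+2)(\lambda-2(p-1))^{p-1}$.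
   Context: The group generated by $e_1,\dots,e_p$ is the star automaton group $\mathcal G_{S_p}$; $A_n$ is the adjacency matrix of its $n$-th Schreier graph $\Gamma^p_n$ (vertex set $X^n$, an edge joining $v$ and $e_i(v)$ for each $v$ and $i$, loops counted twice on the diagonal). *)

theory Defs
  imports "Jordan_Normal_Form.Char_Poly"
begin

fun star_e :: "nat \<Rightarrow> nat list \<Rightarrow> nat list" where
  "star_e i [] = []"
| "star_e i (x # w) = (if x = 0 then i # star_e i w else if x = i then 0 # w else x # w)"

definition word_of :: "nat \<Rightarrow> nat \<Rightarrow> nat \<Rightarrow> nat list" where
  "word_of p n k = map (\<lambda>j. k div (p + 1) ^ j mod (p + 1)) [0..<n]"

definition perm_mat :: "nat \<Rightarrow> nat \<Rightarrow> nat \<Rightarrow> int mat" where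
  "perm_mat p n i = mat ((p + 1) ^ n) ((p + 1) ^ n)
     (\<lambda>(r, c). if word_of p n r = star_e i (word_of p n c) then 1 else 0)"

text \<open>Its inverse: the permutation matrix of e_i^{-1}.\<close>
definition perm_mat_inv :: "nat \<Rightarrow> nat \<Rightarrow> nat \<Rightarrow> int mat" where
  "perm_mat_inv p n i = mat ((p + 1) ^ n) ((p + 1) ^ n)
     (\<lambda>(r, c). if star_e i (word_of p n r) = word_of p n c then 1 else 0)"

definition adj_mat :: "nat \<Rightarrow> nat \<Rightarrow> int mat" where
  "adj_mat p n = mat ((p + 1) ^ n) ((p + 1) ^ n)
     (\<lambda>(r, c). \<Sum>i = 1..p. perm_mat p n i $$ (r, c) + perm_mat_inv p n i $$ (r, c))"

definition f_poly :: "nat \<Rightarrow> int poly" where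
  "f_poly p = [: - 2 * int p, - 2 * (int p - 1), 1 :]"

end

theory Submission
  imports Defs
begin

(* Group the words of length n+1 by their first letter.  Two words beginning with 0 are never
   adjacent; a word x w with x >= 1 is fixed by the p - 1 generators e_i, i ~= x (a loop of weight
   2(p-1)), and otherwise joined only to 0 w and to 0 e_x^-1(w).  Hence, after a permutation of the
   indices, A_(n+1) = [[0, B^T], [B, 2(p-1) I]] where B stacks the matrices M_x + I, x = 1..p, and
   B^T B = sum_x (M_x^T + I)(M_x + I) = 2p I + A_n.  Taking the Schur complement of the scalar block
   (lambda - 2(p-1)) I in lambda I - A_(n+1) turns det(lambda I - A_(n+1)) into
   (lambda - 2(p-1))^((p-1)(p+1)^n) det((lambda^2 - 2(p-1) lambda - 2p) I - A_n). *)

lemma det_permute_rows_cols: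
  fixes A :: "'a::comm_ring_1 mat"
  assumes A: "A \<in> carrier_mat n n" and p: "p permutes {0..<n}"
  shows "det (mat n n (\<lambda>(i,j). A $$ (p i, p j))) = det A"
proof -
  have p_lt: "i < n \<Longrightarrow> p i < n" for i
    using p by (simp add: permutes_in_image)
  define B where "B = mat n n (\<lambda>(i,j). A $$ (i, p j))"
  have B: "B \<in> carrier_mat n n" unfolding B_def by simp
  have "det (mat n n (\<lambda>(i,j). A $$ (p i, p j))) = det (mat n n (\<lambda>(i,j). B $$ (p i, j)))"
    by (rule arg_cong[of _ _ det]) (auto simp: B_def p_lt)
  also have "\<dots> = signof p * det B"
    by (rule det_permute_rows[OF B p])
  also have "det B = det (mat n n (\<lambda>(i,j). A\<^sup>T $$ (p i, j)))"
    unfolding det_transpose[OF B, symmetric]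
    by (rule arg_cong[of _ _ det]) (use A in \<open>auto simp: B_def p_lt\<close>)
  also have "\<dots> = signof p * det A"
    using det_permute_rows[of "A\<^sup>T" n p] A p det_transpose[OF A] by simp
  finally show ?thesis
    by (simp flip: mult.assoc of_int_mult)
qed

lemma char_poly_permute:
  fixes A :: "'a::comm_ring_1 mat"
  assumes A: "A \<in> carrier_mat n n" and p: "p permutes {0..<n}"
  shows "char_poly (mat n n (\<lambda>(i,j). A $$ (p i, p j))) = char_poly A"
proof -
  have "char_poly_matrix (mat n n (\<lambda>(i,j). A $$ (p i, p j)))
      = mat n n (\<lambda>(i,j). char_poly_matrix A $$ (p i, p j))"
    using A permutes_in_image[OF p] permutes_inj[OF p]
    by (intro eq_matI) (auto simp: char_poly_matrix_def inj_eq)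
  then show ?thesis
    unfolding char_poly_def using det_permute_rows_cols[OF char_poly_matrix_closed[OF A] p] by simp
qed

(* The Schur complement formula, multiplied through by y^n so that no division is needed. *)
lemma det_four_block_mat_scalar_lower_right:
  fixes A :: "'a::idom mat"
  assumes A: "A \<in> carrier_mat n n" and B: "B \<in> carrier_mat n m" and C: "C \<in> carrier_mat m n"
  shows "det (four_block_mat A B C (y \<cdot>\<^sub>m 1\<^sub>m m)) * y ^ n = y ^ m * det (y \<cdot>\<^sub>m A - B * C)"
proof -
  define H where "H = four_block_mat (y \<cdot>\<^sub>m 1\<^sub>m n) (0\<^sub>m n m) (- C) (1\<^sub>m m)"
  have H: "H \<in> carrier_mat (n + m) (n + m)" and det_H: "det H = y ^ n"
    unfolding H_def using C by (auto simp: det_four_block_mat_upper_right_zero[of _ n _ m])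
  have "four_block_mat A B C (y \<cdot>\<^sub>m 1\<^sub>m m) * H
      = four_block_mat (y \<cdot>\<^sub>m A - B * C) B (0\<^sub>m m n) (y \<cdot>\<^sub>m 1\<^sub>m m)"
    unfolding H_def using A B C
    by (subst mult_four_block_mat) (auto simp: mult_smult_distrib mult_smult_assoc_mat)
  moreover have "y \<cdot>\<^sub>m A - B * C \<in> carrier_mat n n"
    using A B C by auto
  ultimately have "det (four_block_mat A B C (y \<cdot>\<^sub>m 1\<^sub>m m)) * det H = det (y \<cdot>\<^sub>m A - B * C) * y ^ m"
    using A B C H det_four_block_mat_lower_left_zero[of "y \<cdot>\<^sub>m A - B * C" n B m "0\<^sub>m m n" "y \<cdot>\<^sub>m 1\<^sub>m m"]
    by (simp add: det_mult[symmetric, of _ "n + m"])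
  then show ?thesis
    by (simp add: det_H mult.commute)
qed

lemma comm_ring_hom_pcompose: "comm_ring_hom (\<lambda>q. q \<circ>\<^sub>p (r :: 'a::comm_ring_1 poly))"
  by unfold_locales (auto simp: pcompose_add pcompose_mult)

lemma char_poly_four_block_mat_scalar:
  fixes B :: "'a::idom mat"
  assumes B: "B \<in> carrier_mat m n" and C: "C \<in> carrier_mat n m"
  shows "char_poly (four_block_mat (0\<^sub>m n n) C B (c \<cdot>\<^sub>m 1\<^sub>m m)) * [:-c, 1:] ^ n
       = [:-c, 1:] ^ m * char_poly (C * B) \<circ>\<^sub>p [:0, -c, 1:]"
proof -
  let ?neg = "map_mat (\<lambda>a. [:- a:])"
  have "char_poly_matrix (four_block_mat (0\<^sub>m n n) C B (c \<cdot>\<^sub>m 1\<^sub>m m))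
      = four_block_mat ([:0, 1:] \<cdot>\<^sub>m 1\<^sub>m n) (?neg C) (?neg B) ([:-c, 1:] \<cdot>\<^sub>m 1\<^sub>m m)"
    using B C by (intro eq_matI) (auto simp: char_poly_matrix_def pCons_one)
  then have "char_poly (four_block_mat (0\<^sub>m n n) C B (c \<cdot>\<^sub>m 1\<^sub>m m)) * [:-c, 1:] ^ n
      = [:-c, 1:] ^ m * det ([:-c, 1:] \<cdot>\<^sub>m ([:0, 1:] \<cdot>\<^sub>m 1\<^sub>m n) - ?neg C * ?neg B)"
    unfolding char_poly_def using B C by (simp add: det_four_block_mat_scalar_lower_right)
  also have "[:-c, 1:] \<cdot>\<^sub>m ([:0, 1:] \<cdot>\<^sub>m 1\<^sub>m n) - ?neg C * ?neg B
      = map_mat (\<lambda>q. q \<circ>\<^sub>p [:0, -c, 1:]) (char_poly_matrix (C * B))"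
    using B C by (intro eq_matI) (auto simp: char_poly_matrix_def scalar_prod_def mult_to_poly sum_to_poly mult.commute)
  also have "det \<dots> = char_poly (C * B) \<circ>\<^sub>p [:0, -c, 1:]"
    unfolding char_poly_def by (rule comm_ring_hom.hom_det[OF comm_ring_hom_pcompose])
  finally show ?thesis .
qed

lemma char_poly_add_scalar:
  fixes A :: "'a::comm_ring_1 mat"
  assumes A: "A \<in> carrier_mat n n"
  shows "char_poly (d \<cdot>\<^sub>m 1\<^sub>m n + A) = char_poly A \<circ>\<^sub>p [:-d, 1:]"
proof -
  have "char_poly_matrix (d \<cdot>\<^sub>m 1\<^sub>m n + A) = map_mat (\<lambda>q. q \<circ>\<^sub>p [:-d, 1:]) (char_poly_matrix A)"
    using A by (intro eq_matI) (auto simp: char_poly_matrix_def pCons_one)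
  then show ?thesis
    unfolding char_poly_def by (simp add: comm_ring_hom.hom_det[OF comm_ring_hom_pcompose])
qed

lemma sum_delta_mult:
  assumes "finite A" "s \<in> A"
  shows "(\<Sum>x\<in>A. (if x = s then 1 else 0) * (if x = t then 1 else 0)) = (if s = t then 1 else (0::'a::semiring_1))"
proof -
  have "(\<Sum>x\<in>A. (if x = s then 1 else 0) * (if x = t then 1 else 0))
      = (\<Sum>x\<in>A. if x = s then (if s = t then 1 else 0) else (0::'a))"
    by (intro sum.cong) auto
  then show ?thesis
    using assms by simp
qed

definition words :: "nat \<Rightarrow> nat \<Rightarrow> nat list set" where
  "words p n = {L. set L \<subseteq> {..p} \<and> length L = n}"

lemma word_of_Suc: "word_of p (Suc n) k = k mod (p + 1) # word_of p n (k div (p + 1))"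
proof -
  have "k div (p + 1) ^ Suc j = k div (p + 1) div (p + 1) ^ j" for j
    by (simp only: power_Suc div_mult2_eq)
  then show ?thesis
    unfolding word_of_def map_upt_Suc by simp
qed

lemma word_of_in_words: "word_of p n k \<in> words p n"
  unfolding words_def word_of_def by auto

lemma finite_words: "finite (words p n)"
  unfolding words_def by (simp add: finite_lists_length_eq)

lemma inj_on_word_of: "inj_on (word_of p n) {..<(p + 1) ^ n}"
proof (induction n)
  case 0
  then show ?case by (simp add: lessThan_Suc)
next
  case (Suc n)
  show ?case
  proof (rule inj_onI)
    fix u v assume u: "u \<in> {..<(p + 1) ^ Suc n}" and v: "v \<in> {..<(p + 1) ^ Suc n}"
      and eq: "word_of p (Suc n) u = word_of p (Suc n) v"
    have "u div (p + 1) \<in> {..<(p + 1) ^ n}" "v div (p + 1) \<in> {..<(p + 1) ^ n}"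
      using u v by (auto simp: less_mult_imp_div_less mult.commute)
    with eq Suc.IH have "u div (p + 1) = v div (p + 1)" "u mod (p + 1) = v mod (p + 1)"
      by (auto simp: word_of_Suc dest: inj_onD)
    then show "u = v"
      by (metis div_mult_mod_eq)
  qed
qed

lemma bij_betw_word_of: "bij_betw (word_of p n) {..<(p + 1) ^ n} (words p n)"
proof -
  have "card (words p n) = (p + 1) ^ n"
    unfolding words_def by (simp add: card_lists_length_eq)
  moreover have "card (word_of p n ` {..<(p + 1) ^ n}) = (p + 1) ^ n"
    using card_image[OF inj_on_word_of] by simp
  moreover have "word_of p n ` {..<(p + 1) ^ n} \<subseteq> words p n"
    using word_of_in_words by blast
  ultimately show ?thesis
    unfolding bij_betw_def using inj_on_word_of card_subset_eq finite_words by metis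
qed

lemma sum_over_words: "(\<Sum>u<(p + 1) ^ n. g (word_of p n u)) = (\<Sum>L\<in>words p n. g L)"
  using sum.reindex_bij_betw[OF bij_betw_word_of] by blast

lemma star_e_in_words: "i \<le> p \<Longrightarrow> L \<in> words p n \<Longrightarrow> star_e i L \<in> words p n"
  unfolding words_def by (induction L arbitrary: n) auto

lemma star_e_eq_iff [simp]: "star_e i u = star_e i v \<longleftrightarrow> u = v"
proof (induction u arbitrary: v)
  case Nil
  then show ?case by (cases v) auto
next
  case (Cons a u)
  then show ?case by (cases v) auto
qed

definition edge_count :: "nat \<Rightarrow> nat list \<Rightarrow> nat list \<Rightarrow> int" where
  "edge_count p u v = (\<Sum>i = 1..p. (if u = star_e i v then 1 else 0) + (if star_e i u = v then 1 else 0))"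

lemma adj_mat_eq_edge_count:
  assumes "r < (p + 1) ^ n" "c < (p + 1) ^ n"
  shows "adj_mat p n $$ (r, c) = edge_count p (word_of p n r) (word_of p n c)"
  using assms by (simp add: adj_mat_def perm_mat_def perm_mat_inv_def edge_count_def)

lemma edge_count_sym: "edge_count p u v = edge_count p v u"
  unfolding edge_count_def by (intro sum.cong) auto

lemma edge_count_0_0: "edge_count p (0 # u) (0 # v) = 0"
  unfolding edge_count_def by (intro sum.neutral) auto

lemma edge_count_letter_0:
  assumes "1 \<le> x" "x \<le> p"
  shows "edge_count p (x # u) (0 # v) = (if u = star_e x v then 1 else 0) + (if u = v then 1 else 0)"
proof -
  have "edge_count p (x # u) (0 # v)
      = (\<Sum>i = 1..p. if i = x then (if u = star_e x v then 1 else 0) + (if u = v then 1 else 0) else 0)"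
    unfolding edge_count_def using assms by (intro sum.cong) auto
  then show ?thesis
    using assms by simp
qed

lemma edge_count_letter_letter:
  assumes "1 \<le> x" "x \<le> p" "1 \<le> y" "y \<le> p"
  shows "edge_count p (x # u) (y # v) = (if x = y \<and> u = v then 2 * (int p - 1) else 0)"
proof -
  define d :: int where "d = (if x = y \<and> u = v then 1 else 0)"
  have "edge_count p (x # u) (y # v) = (\<Sum>i = 1..p. 2 * d - (if i = x then 2 * d else 0))"
    unfolding edge_count_def d_def using assms by (intro sum.cong) auto
  also have "\<dots> = 2 * (int p - 1) * d"
    using assms by (simp add: sum_subtractf algebra_simps)
  finally show ?thesis
    by (simp add: d_def)
qed

lemma sum_edge_count_letter_0_mult:
  assumes x: "1 \<le> x" "x \<le> p" and a: "a \<in> words p n" and b: "b \<in> words p n"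
  shows "(\<Sum>L\<in>words p n. edge_count p (x # L) (0 # a) * edge_count p (x # L) (0 # b))
       = 2 * (if a = b then 1 else 0) + (if a = star_e x b then 1 else 0) + (if star_e x a = b then 1 else 0)"
proof -
  let ?\<delta> = "\<lambda>L s. if L = s then 1 else 0 :: int"
  have "(\<Sum>L\<in>words p n. edge_count p (x # L) (0 # a) * edge_count p (x # L) (0 # b))
      = (\<Sum>L\<in>words p n. ?\<delta> L (star_e x a) * ?\<delta> L (star_e x b)) + (\<Sum>L\<in>words p n. ?\<delta> L (star_e x a) * ?\<delta> L b)
        + (\<Sum>L\<in>words p n. ?\<delta> L a * ?\<delta> L (star_e x b)) + (\<Sum>L\<in>words p n. ?\<delta> L a * ?\<delta> L b)"
    unfolding edge_count_letter_0[OF x] by (simp add: algebra_simps sum.distrib)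
  also have "\<dots> = (if a = b then 1 else 0) + (if star_e x a = b then 1 else 0) + (if a = star_e x b then 1 else 0)
      + (if a = b then 1 else 0)"
    using x a b by (simp add: sum_delta_mult finite_words star_e_in_words)
  finally show ?thesis
    by simp
qed

(* The x-th block of (p+1)^n rows is perm_mat p n x + 1, by edge_count_letter_0. *)
definition cross_block :: "nat \<Rightarrow> nat \<Rightarrow> int mat" where
  "cross_block p n = mat (p * (p + 1) ^ n) ((p + 1) ^ n) (\<lambda>(k, w).
     edge_count p (Suc (k div (p + 1) ^ n) # word_of p n (k mod (p + 1) ^ n)) (0 # word_of p n w))"

lemma cross_block_carrier: "cross_block p n \<in> carrier_mat (p * (p + 1) ^ n) ((p + 1) ^ n)"
  unfolding cross_block_def by simp

lemma cross_block_gram: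
  "(cross_block p n)\<^sup>T * cross_block p n = (2 * int p) \<cdot>\<^sub>m 1\<^sub>m ((p + 1) ^ n) + adj_mat p n"
proof (rule eq_matI)
  define N where "N = (p + 1) ^ n"
  define C where "C = cross_block p n"
  fix w w' assume "w < dim_row ((2 * int p) \<cdot>\<^sub>m 1\<^sub>m ((p + 1) ^ n) + adj_mat p n)"
    and "w' < dim_col ((2 * int p) \<cdot>\<^sub>m 1\<^sub>m ((p + 1) ^ n) + adj_mat p n)"
  then have w: "w < N" "w' < N"
    by (simp_all add: N_def adj_mat_def)
  define a where "a = word_of p n w"
  define b where "b = word_of p n w'"
  have ab: "a \<in> words p n" "b \<in> words p n"
    unfolding a_def b_def by (simp_all add: word_of_in_words)
  have C_entry: "C $$ (j * N + u, v) = edge_count p (Suc j # word_of p n u) (0 # word_of p n v)"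
    if "j < p" "u < N" "v < N" for j u v
  proof -
    have "j * N + u < Suc j * N"
      using that by simp
    also have "\<dots> \<le> p * N"
      using that by (intro mult_le_mono1) simp
    finally show ?thesis
      using that unfolding C_def cross_block_def N_def by simp
  qed
  have "(C\<^sup>T * C) $$ (w, w') = (\<Sum>k<p * N. C $$ (k, w) * C $$ (k, w'))"
    using w cross_block_carrier[of p n] by (simp add: C_def N_def scalar_prod_def atLeast0LessThan)
  also have "\<dots> = (\<Sum>j<p. \<Sum>u<N. C $$ (j * N + u, w) * C $$ (j * N + u, w'))"
    by (simp add: sum.nat_group[symmetric] sum.shift_bounds_nat_ivl[of _ 0 "_ * N" N, simplified] add.commute
        atLeast0LessThan)
  also have "\<dots> = (\<Sum>j<p. \<Sum>u<N.
      edge_count p (Suc j # word_of p n u) (0 # a) * edge_count p (Suc j # word_of p n u) (0 # b))"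
    using w by (intro sum.cong refl) (simp add: C_entry a_def b_def)
  also have "\<dots> = (\<Sum>j<p. \<Sum>L\<in>words p n. edge_count p (Suc j # L) (0 # a) * edge_count p (Suc j # L) (0 # b))"
    unfolding N_def by (intro sum.cong refl sum_over_words)
  also have "\<dots> = (\<Sum>x = 1..p. 2 * (if a = b then 1 else 0) + (if a = star_e x b then 1 else 0)
      + (if star_e x a = b then 1 else 0))"
    using ab by (simp add: sum.atLeast1_atMost_eq sum_edge_count_letter_0_mult)
  also have "\<dots> = 2 * int p * (if w = w' then 1 else 0) + adj_mat p n $$ (w, w')"
    using w inj_on_word_of[of p n]
    by (simp add: sum.distrib edge_count_def adj_mat_eq_edge_count a_def b_def N_def inj_on_eq_iff)
  finally show "(C\<^sup>T * C) $$ (w, w') = ((2 * int p) \<cdot>\<^sub>m 1\<^sub>m ((p + 1) ^ n) + adj_mat p n) $$ (w, w')"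
    using w by (simp add: N_def adj_mat_def)
qed (simp_all add: cross_block_def adj_mat_def)

(* word_of keeps the first letter in the least significant digit; block_index reorders the
   indices so that words are grouped by their first letter. *)
definition block_index :: "nat \<Rightarrow> nat \<Rightarrow> nat \<Rightarrow> nat" where
  "block_index p n K = K div (p + 1) ^ n + (p + 1) * (K mod (p + 1) ^ n)"

lemma word_of_block_index:
  assumes "K < (p + 1) ^ Suc n"
  shows "word_of p (Suc n) (block_index p n K) = K div (p + 1) ^ n # word_of p n (K mod (p + 1) ^ n)"
proof -
  have "K div (p + 1) ^ n < p + 1"
    using assms by (simp add: less_mult_imp_div_less)
  then have "block_index p n K mod (p + 1) = K div (p + 1) ^ n"
    and "block_index p n K div (p + 1) = K mod (p + 1) ^ n"
    unfolding block_index_def by (simp_all only: mod_mult_self2 mod_less) (subst div_mult_self2; simp)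
  then show ?thesis
    by (simp only: word_of_Suc)
qed

lemma block_index_less:
  assumes "K < (p + 1) ^ Suc n"
  shows "block_index p n K < (p + 1) ^ Suc n"
proof -
  have "K div (p + 1) ^ n + (p + 1) * (K mod (p + 1) ^ n) < (p + 1) * (K mod (p + 1) ^ n + 1)"
    using assms by (simp add: less_mult_imp_div_less)
  also have "\<dots> \<le> (p + 1) * (p + 1) ^ n"
    by (intro mult_le_mono2) (simp add: Suc_le_eq)
  finally show ?thesis
    by (simp add: block_index_def)
qed

lemma bij_betw_block_index: "bij_betw (block_index p n) {0..<(p + 1) ^ Suc n} {0..<(p + 1) ^ Suc n}"
proof -
  have "inj_on (block_index p n) {0..<(p + 1) ^ Suc n}"
  proof (rule inj_onI)
    fix K K' assume "K \<in> {0..<(p + 1) ^ Suc n}" "K' \<in> {0..<(p + 1) ^ Suc n}"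
      and "block_index p n K = block_index p n K'"
    then have "K div (p + 1) ^ n = K' div (p + 1) ^ n"
      and "word_of p n (K mod (p + 1) ^ n) = word_of p n (K' mod (p + 1) ^ n)"
      using word_of_block_index by (metis atLeastLessThan_iff list.inject)+
    moreover have "K mod (p + 1) ^ n = K' mod (p + 1) ^ n"
      using inj_onD[OF inj_on_word_of calculation(2)] by simp
    ultimately show "K = K'"
      by (metis div_mult_mod_eq)
  qed
  moreover have "block_index p n ` {0..<(p + 1) ^ Suc n} \<subseteq> {0..<(p + 1) ^ Suc n}"
    using block_index_less by auto
  ultimately show ?thesis
    unfolding bij_betw_def by (simp add: endo_inj_surj)
qed

lemma adj_mat_Suc_block_form:
  fixes p n :: nat
  defines "N \<equiv> (p + 1) ^ n"
  shows "mat ((p + 1) ^ Suc n) ((p + 1) ^ Suc n)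
           (\<lambda>(K, K'). adj_mat p (Suc n) $$ (block_index p n K, block_index p n K'))
       = four_block_mat (0\<^sub>m N N) (cross_block p n)\<^sup>T (cross_block p n) ((2 * (int p - 1)) \<cdot>\<^sub>m 1\<^sub>m (p * N))"
    (is "?L = ?R")
proof (rule eq_matI)
  have size: "(p + 1) ^ Suc n = N + p * N"
    by (simp add: N_def)
  have N: "0 < N"
    by (simp add: N_def)
  let ?word = "\<lambda>K. K div N # word_of p n (K mod N)"
  fix K K' assume "K < dim_row ?R" "K' < dim_col ?R"
  then have K: "K < N + p * N" and K': "K' < N + p * N"
    using cross_block_carrier[of p n] by (simp_all add: N_def)
  have KS: "K < (p + 1) ^ Suc n" "K' < (p + 1) ^ Suc n"
    using K K' size by simp_all
  have "?L $$ (K, K') = adj_mat p (Suc n) $$ (block_index p n K, block_index p n K')"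
    using KS by simp
  also have "\<dots> = edge_count p (?word K) (?word K')"
    unfolding adj_mat_eq_edge_count[OF block_index_less[OF KS(1)] block_index_less[OF KS(2)]]
    using KS by (simp only: word_of_block_index N_def)
  finally have L: "?L $$ (K, K') = edge_count p (?word K) (?word K')" .
  have first_letter: "K div N = Suc ((K - N) div N) \<and> K mod N = (K - N) mod N \<and> K div N \<le> p"
    if "K < N + p * N" "\<not> K < N" for K
  proof -
    have "(K - N) div N < p"
      using that by (intro less_mult_imp_div_less) linarith
    then show ?thesis
      using that N by (auto simp: le_div_geq le_mod_geq)
  qed
  show "?L $$ (K, K') = ?R $$ (K, K')"
  proof (cases "K < N"; cases "K' < N")
    assume "K < N" "K' < N"
    then show ?thesis
      using L by (simp add: edge_count_0_0)
  next
    assume "\<not> K < N" "K' < N"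
    then show ?thesis
      using L K first_letter[OF K] cross_block_carrier[of p n] by (simp add: cross_block_def N_def)
  next
    assume "K < N" "\<not> K' < N"
    then show ?thesis
      using L K' first_letter[OF K'] cross_block_carrier[of p n] by (simp add: cross_block_def N_def edge_count_sym)
  next
    assume K_ge: "\<not> K < N" and K'_ge: "\<not> K' < N"
    then have "?R $$ (K, K') = (if K = K' then 2 * (int p - 1) else 0)"
      using K K' cross_block_carrier[of p n] by (auto simp: N_def)
    moreover have "K = K' \<longleftrightarrow> K div N = K' div N \<and> word_of p n (K mod N) = word_of p n (K' mod N)"
      using inj_on_word_of[of p n] N unfolding N_def by (metis div_mult_mod_eq inj_on_eq_iff lessThan_iff mod_less_divisor)
    ultimately show ?thesis
      using L first_letter[OF K K_ge] first_letter[OF K' K'_ge] by (simp add: edge_count_letter_letter)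
  qed
qed (simp_all add: cross_block_def N_def)

lemma char_poly_adj_mat_Suc:
  assumes "p \<ge> 1"
  shows "char_poly (adj_mat p (Suc n))
       = [:- 2 * (int p - 1), 1:] ^ ((p - 1) * (p + 1) ^ n) * char_poly (adj_mat p n) \<circ>\<^sub>p f_poly p"
proof -
  define N where "N = (p + 1) ^ n"
  define C where "C = cross_block p n"
  define c :: int where "c = 2 * (int p - 1)"
  define \<tau> where "\<tau> = restrict_id (block_index p n) {0..<(p + 1) ^ Suc n}"
  have \<tau>: "\<tau> permutes {0..<(p + 1) ^ Suc n}"
    unfolding \<tau>_def by (rule permutes_restrict_id[OF bij_betw_block_index])
  have "char_poly (adj_mat p (Suc n))
      = char_poly (mat ((p + 1) ^ Suc n) ((p + 1) ^ Suc n) (\<lambda>(K, K'). adj_mat p (Suc n) $$ (\<tau> K, \<tau> K')))"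
    by (rule char_poly_permute[symmetric, OF _ \<tau>]) (simp add: adj_mat_def)
  also have "mat ((p + 1) ^ Suc n) ((p + 1) ^ Suc n) (\<lambda>(K, K'). adj_mat p (Suc n) $$ (\<tau> K, \<tau> K'))
      = four_block_mat (0\<^sub>m N N) C\<^sup>T C (c \<cdot>\<^sub>m 1\<^sub>m (p * N))"
    unfolding adj_mat_Suc_block_form[symmetric] C_def c_def N_def \<tau>_def
    by (intro eq_matI) (auto simp: restrict_id_def)
  finally have "char_poly (adj_mat p (Suc n)) * [:-c, 1:] ^ N
      = [:-c, 1:] ^ (p * N) * char_poly (C\<^sup>T * C) \<circ>\<^sub>p [:0, -c, 1:]"
    using char_poly_four_block_mat_scalar[of C "p * N" N "C\<^sup>T" c] cross_block_carrier[of p n]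
    by (simp add: C_def N_def)
  also have "char_poly (C\<^sup>T * C) \<circ>\<^sub>p [:0, -c, 1:] = char_poly (adj_mat p n) \<circ>\<^sub>p ([:- 2 * int p, 1:] \<circ>\<^sub>p [:0, -c, 1:])"
    unfolding C_def cross_block_gram pcompose_assoc
    by (subst char_poly_add_scalar[of _ "(p + 1) ^ n"]) (simp_all add: adj_mat_def)
  also have "[:- 2 * int p, 1:] \<circ>\<^sub>p [:0, -c, 1:] = f_poly p"
    by (simp add: f_poly_def c_def)
  also have "[:-c, 1:] ^ (p * N) = [:-c, 1:] ^ ((p - 1) * N) * [:-c, 1:] ^ N"
    using assms by (simp flip: power_add) (simp add: algebra_simps)
  finally show ?thesis
    by (simp add: c_def N_def)
qed

lemma char_poly_adj_mat_0: "char_poly (adj_mat p 0) = [:- 2 * int p, 1:]"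
proof -
  have "adj_mat p 0 = mat 1 1 (\<lambda>_. 2 * int p)"
    by (intro eq_matI) (simp_all add: adj_mat_def perm_mat_def perm_mat_inv_def word_of_def)
  then show ?thesis
    by (simp add: char_poly_def char_poly_matrix_def det_single)
qed

theorem theorem3p8:
  fixes p :: nat
  assumes "p \<ge> 1"
  shows "(\<forall>n\<ge>1. char_poly (adj_mat p (Suc n)) =
            [: - 2 * (int p - 1), 1 :] ^ ((p - 1) * (p + 1) ^ n)
            * pcompose (char_poly (adj_mat p n)) (f_poly p))
       \<and> char_poly (adj_mat p 1) =
            [: - 2 * int p, 1 :] * [: 2, 1 :] * [: - 2 * (int p - 1), 1 :] ^ (p - 1)"
proof
  show "\<forall>n\<ge>1. char_poly (adj_mat p (Suc n)) =
            [: - 2 * (int p - 1), 1 :] ^ ((p - 1) * (p + 1) ^ n)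
            * pcompose (char_poly (adj_mat p n)) (f_poly p)"
    using char_poly_adj_mat_Suc[OF assms] by blast
  have "char_poly (adj_mat p 1) = [: - 2 * (int p - 1), 1 :] ^ (p - 1) * [: - 2 * int p, 1 :] \<circ>\<^sub>p f_poly p"
    using char_poly_adj_mat_Suc[OF assms, of 0] by (simp add: char_poly_adj_mat_0)
  also have "[: - 2 * int p, 1 :] \<circ>\<^sub>p f_poly p = [: - 2 * int p, 1 :] * [: 2, 1 :]"
    by (simp add: f_poly_def algebra_simps)
  finally show "char_poly (adj_mat p 1) =
            [: - 2 * int p, 1 :] * [: 2, 1 :] * [: - 2 * (int p - 1), 1 :] ^ (p - 1)"
    by (simp add: mult.commute)
qed

end
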